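(* Let $Z=A\cdot[0,1]^n\subseteq\mathbb{R}^d$ be a unimodular zonotope with matroid $M$. If $M$ has no coloops, then the element $x_0\otimes1$ (i.e. $x_0$) of $\mathcal{H}_Z$ lies in the interior ideal $\widetilde{\mathcal{H}_Z}$. In all cases $x_0^2\otimes1=x_0^2$ lies in $\widetilde{\mathcal{H}_Z}$. (Under the isomorphism $\mathcal{H}_Z\cong\mathbb{C}[z_S:S\subseteq[n]]/I_L^{\mathrm{SE}}$ these elements correspond to $z_\emptyset$ and $z_\emptyset^2$.)
   Context: A unimodular zonotope is $Z=A\cdot[0,1]^n\subseteq\mathbb{R}^d$ with $A$ a $d\times n$ integer matrix of rank $d$ whose maximal minors lie in $\{-1,0,1\}$; $M$ is the matroid of the columns of $A$; a coloop is an element in every basis. For finite $\mathcal{Z}\subseteq\mathbb{Z}^d\subseteq\mathbb{C}^d$, $\operatorname{gr}I(\mathcal{Z})$ is the ideal generated by top-degree components of polynomials vanishing on $\mathcal{Z}$; $I^\perp$ is the Macaulay inverse system. The harmonic algebra is $\mathcal{H}_Z=\bigoplus_{m\ge0}\mathbb{C}x_0^m\otimes(\operatorname{gr}I(mZ\cap\mathbb{Z}^d))^\perp$ and the interior ideal $\widetilde{\mathcal{H}_Z}=\bigoplus_{m\ge1}\mathbb{C}x_0^m\otimes(\operatorname{gr}I(\operatorname{int}(mZ)\cap\mathbb{Z}^d))^\perp$, both inside $\mathbb{C}[x_0,x_1,\dots,x_d]$. The ideal $I_L^{\mathrm{SE}}$ (for $L$ the complexified row space of $A$) is generated by $z_Sz_T-z_{S\cup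 T}z_{S\cap T}$ and the linear forms $\sum_{i\in C}\alpha_{C,i}z_{A'\cup\{i\}}$ for circuits $C$ with dependence $\sum_{i\in C}\alpha_{C,i}A_i=0$ and $A'\subseteq[n]\setminus C$. *)

theory Defs
  imports "HOL-Analysis.Analysis" "HOL-Library.Poly_Mapping"
begin

(* Polynomials over C in variables indexed by a type 'v:
   monomials are exponent vectors 'v \<Rightarrow>\<^sub>0 nat, polynomials are finitely supported
   coefficient functions on monomials. *)
type_synonym 'v cpoly = "('v \<Rightarrow>\<^sub>0 nat) \<Rightarrow>\<^sub>0 complex"

definition mon_deg :: "('v \<Rightarrow>\<^sub>0 nat) \<Rightarrow> nat" where
  "mon_deg \<beta> = (\<Sum>i\<in>Poly_Mapping.keys \<beta>. Poly_Mapping.lookup \<beta> i)"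

definition tot_deg :: "'v cpoly \<Rightarrow> nat" where
  "tot_deg f = Max (mon_deg ` Poly_Mapping.keys f)"

definition top_comp :: "'v cpoly \<Rightarrow> 'v cpoly" where
  "top_comp f = (\<Sum>\<beta>\<in>{\<beta>\<in>Poly_Mapping.keys f. mon_deg \<beta> = tot_deg f}. Poly_Mapping.single \<beta> (Poly_Mapping.lookup f \<beta>))"

definition poly_ideal :: "'v cpoly set \<Rightarrow> 'v cpoly set" where
  "poly_ideal G = {(\<Sum>g\<in>T. h g * g) | T h. finite T \<and> T \<subseteq> G}"

definition peval :: "'d::finite cpoly \<Rightarrow> real^'d \<Rightarrow> complex" where
  "peval f p = (\<Sum>\<beta>\<in>Poly_Mapping.keys f. Poly_Mapping.lookup f \<beta> * (\<Prod>i\<in>UNIV. (complex_of_real (p $ i)) ^ Poly_Mapping.lookup \<beta> i))"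

definition van_ideal :: "(real^'d::finite) set \<Rightarrow> 'd cpoly set" where
  "van_ideal X = {f. \<forall>p\<in>X. peval f p = 0}"

definition gr_ideal :: "(real^'d::finite) set \<Rightarrow> 'd cpoly set" where
  "gr_ideal X = poly_ideal {top_comp f | f. f \<in> van_ideal X \<and> f \<noteq> 0}"

(* coefficient of x^\<gamma> in g(\<partial>) F, where \<partial>^\<alpha> x^(\<gamma>+\<alpha>) = \<Prod> (\<gamma>_i+\<alpha>_i)!/\<gamma>_i! x^\<gamma> *)
definition diff_apply_coeff :: "'d::finite cpoly \<Rightarrow> 'd cpoly \<Rightarrow> ('d \<Rightarrow>\<^sub>0 nat) \<Rightarrow> complex" where
  "diff_apply_coeff g F \<gamma> =
     (\<Sum>\<alpha>\<in>Poly_Mapping.keys g. Poly_Mapping.lookup g \<alpha> * Poly_Mapping.lookup F (\<gamma> + \<alpha>) *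
        (\<Prod>i\<in>UNIV. of_nat (fact (Poly_Mapping.lookup (\<gamma> + \<alpha>) i)) / of_nat (fact (Poly_Mapping.lookup \<gamma> i))))"

definition inverse_system :: "'d::finite cpoly set \<Rightarrow> 'd cpoly set" where
  "inverse_system I = {F. \<forall>g\<in>I. \<forall>\<gamma>. diff_apply_coeff g F \<gamma> = 0}"

definition lattice_pts :: "(real^'d::finite) set" where
  "lattice_pts = {p. \<forall>i. p $ i \<in> \<int>}"

definition zonotope :: "real^'n::finite^'d::finite \<Rightarrow> (real^'d) set" where
  "zonotope A = {A *v t | t. \<forall>j. 0 \<le> t $ j \<and> t $ j \<le> 1}"

definition unimodular_matrix :: "real^'n::finite^'d::finite \<Rightarrow> bool" where
  "unimodular_matrix A \<longleftrightarrow>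
     (\<forall>i j. A $ i $ j \<in> \<int>) \<and> rank A = CARD('d) \<and>
     (\<forall>f :: 'd \<Rightarrow> 'n. inj f \<longrightarrow> det (\<chi> i k. A $ i $ (f k)) \<in> {-1, 0, 1})"

definition col_indep :: "real^'n::finite^'d::finite \<Rightarrow> 'n set \<Rightarrow> bool" where
  "col_indep A B \<longleftrightarrow> inj_on (\<lambda>j. column j A) B \<and> independent ((\<lambda>j. column j A) ` B)"

definition col_basis :: "real^'n::finite^'d::finite \<Rightarrow> 'n set \<Rightarrow> bool" where
  "col_basis A B \<longleftrightarrow> col_indep A B \<and> (\<forall>B'. B \<subset> B' \<longrightarrow> \<not> col_indep A B')"

definition coloop :: "real^'n::finite^'d::finite \<Rightarrow> 'n \<Rightarrow> bool" where
  "coloop A j \<longleftrightarrow> (\<forall>B. col_basis A B \<longrightarrow> j \<in> B)"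

(* Polynomials in x_0, x_1, ..., x_d: variable None is x_0, variable Some i is x_i.
   P = \<Sum>_m x_0^m \<otimes> F_m, where F_m is the coefficient polynomial of x_0^m. *)
definition x0_decomp :: "'d option cpoly \<Rightarrow> (nat \<Rightarrow> 'd cpoly) \<Rightarrow> bool" where
  "x0_decomp P F \<longleftrightarrow>
     (\<forall>\<beta>. Poly_Mapping.lookup P \<beta> = Poly_Mapping.lookup (F (Poly_Mapping.lookup \<beta> None)) (Poly_Mapping.map_key Some \<beta>))"

definition harmonic_algebra :: "real^'n::finite^'d::finite \<Rightarrow> 'd option cpoly set" where
  "harmonic_algebra A = {P. \<exists>F. x0_decomp P F \<and>
      (\<forall>m. F m \<in> inverse_system (gr_ideal ((\<lambda>x. real m *\<^sub>R x) ` zonotope A \<inter> lattice_pts)))}"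

definition interior_ideal :: "real^'n::finite^'d::finite \<Rightarrow> 'd option cpoly set" where
  "interior_ideal A = {P. \<exists>F. x0_decomp P F \<and> F 0 = 0 \<and>
      (\<forall>m\<ge>1. F m \<in> inverse_system
                 (gr_ideal (interior ((\<lambda>x. real m *\<^sub>R x) ` zonotope A) \<inter> lattice_pts)))}"

definition X0 :: "'d option cpoly" where
  "X0 = Poly_Mapping.single (Poly_Mapping.single None 1) 1"

end

theory Submission imports Defs begin

(* x_0^k lies in the interior ideal as soon as int(kZ) contains a lattice point: a nonempty
   point set admits no vanishing polynomial with nonzero constant term, so every element of
   gr I(X) has zero constant term and hence annihilates the constant 1.
   Since A has full rank it maps the open cube (0,c)^n onto an open subset of cZ.  For k = 2,
   A(1,...,1) is the image of the centre of (0,2)^n.  For k = 1, the absence of coloops gives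
   a kernel vector w with all coordinates nonzero and of absolute value < 1; adding 1 to its
   negative coordinates gives a point of (0,1)^n whose image is A e for a 0/1-vector e. *)

lemma mon_deg_eq_0_iff: "mon_deg \<beta> = 0 \<longleftrightarrow> \<beta> = 0"
  by (auto simp: mon_deg_def in_keys_iff poly_mapping_eq_iff fun_eq_iff)

lemma lookup_top_comp:
  "Poly_Mapping.lookup (top_comp f) \<beta> =
     (if mon_deg \<beta> = tot_deg f then Poly_Mapping.lookup f \<beta> else 0)"
  by (auto simp: top_comp_def lookup_sum lookup_single when_def in_keys_iff)

lemma lookup_0_top_comp:
  assumes "f \<in> van_ideal X" and "X \<noteq> {}"
  shows "Poly_Mapping.lookup (top_comp f) 0 = 0"
proof (rule ccontr)
  assume "Poly_Mapping.lookup (top_comp f) 0 \<noteq> 0"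
  then have deg: "tot_deg f = 0" and const: "Poly_Mapping.lookup f 0 \<noteq> 0"
    by (auto simp: lookup_top_comp mon_deg_def split: if_splits)
  have "mon_deg \<gamma> = 0" if "\<gamma> \<in> Poly_Mapping.keys f" for \<gamma>
    using that deg unfolding tot_deg_def by (metis Max_ge finite_imageI finite_keys imageI le_zero_eq)
  then have "Poly_Mapping.keys f = {0}"
    using const by (auto simp: mon_deg_eq_0_iff in_keys_iff)
  moreover obtain p where "p \<in> X"
    using assms(2) by blast
  ultimately have "peval f p = Poly_Mapping.lookup f 0"
    by (simp add: peval_def)
  with \<open>p \<in> X\<close> assms(1) const show False
    by (simp add: van_ideal_def)
qed

lemma poly_mapping_nat_add_eq_0_iff:
  "(l::'v \<Rightarrow>\<^sub>0 nat) + m = 0 \<longleftrightarrow> l = 0 \<and> m = 0"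
  by (auto simp: poly_mapping_eq_iff fun_eq_iff lookup_add)

lemma lookup_times_0:
  fixes p q :: "('v \<Rightarrow>\<^sub>0 nat) \<Rightarrow>\<^sub>0 'a::semiring_0"
  shows "Poly_Mapping.lookup (p * q) 0 = Poly_Mapping.lookup p 0 * Poly_Mapping.lookup q 0"
proof -
  have "(\<Sum>m. Poly_Mapping.lookup q m when 0 = l + m) = (Poly_Mapping.lookup q 0 when l = 0)" for l
    by (cases "l = 0") (simp_all add: poly_mapping_nat_add_eq_0_iff eq_commute[of 0])
  then show ?thesis
    by (simp add: lookup_mult mult_when)
qed

lemma lookup_0_poly_ideal:
  assumes "p \<in> poly_ideal G" and "\<forall>g\<in>G. Poly_Mapping.lookup g 0 = 0"
  shows "Poly_Mapping.lookup p 0 = 0"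
  using assms by (fastforce simp: poly_ideal_def lookup_sum lookup_times_0 intro!: sum.neutral)

lemma lookup_0_gr_ideal:
  assumes "X \<noteq> {}" and "g \<in> gr_ideal X"
  shows "Poly_Mapping.lookup g 0 = 0"
  using assms(2) unfolding gr_ideal_def
  by (rule lookup_0_poly_ideal) (auto intro: lookup_0_top_comp[OF _ assms(1)])

lemma zero_in_inverse_system: "0 \<in> inverse_system I"
  by (simp add: inverse_system_def diff_apply_coeff_def)

lemma one_in_inverse_system:
  assumes "\<forall>g\<in>I. Poly_Mapping.lookup g 0 = 0"
  shows "1 \<in> inverse_system I"
proof -
  have summand_0: "Poly_Mapping.lookup g \<alpha> * Poly_Mapping.lookup 1 (\<gamma> + \<alpha>) = 0"
    if "g \<in> I" for g \<alpha> \<gamma>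
    using assms that by (auto simp: lookup_one when_def poly_mapping_nat_add_eq_0_iff)
  show ?thesis
    by (auto simp: inverse_system_def diff_apply_coeff_def summand_0 intro!: sum.neutral)
qed

lemma X0_power: "(X0 :: 'v option cpoly) ^ k = Poly_Mapping.single (Poly_Mapping.single None k) 1"
  by (induction k) (simp_all add: X0_def mult_single single_add[symmetric])

lemma eq_single_None_iff:
  "\<beta> = Poly_Mapping.single None k \<longleftrightarrow>
     Poly_Mapping.lookup \<beta> None = k \<and> Poly_Mapping.map_key Some \<beta> = 0"
  by (auto simp: poly_mapping_eq_iff fun_eq_iff Poly_Mapping.map_key.rep_eq lookup_single
      when_def) (metis not_None_eq)

lemma x0_decomp_X0_power:
  "x0_decomp ((X0 :: 'd option cpoly) ^ k) (\<lambda>m. if m = k then 1 else 0)"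
  by (auto simp: x0_decomp_def X0_power lookup_single when_def lookup_one
      eq_commute[of "Poly_Mapping.single None k"] eq_single_None_iff)

lemma X0_power_in_interior_ideal:
  fixes A :: "real^'n::finite^'d::finite"
  assumes "k \<ge> 1"
    and "p \<in> interior ((\<lambda>x. real k *\<^sub>R x) ` zonotope A)" and "p \<in> lattice_pts"
  shows "(X0 :: 'd option cpoly) ^ k \<in> interior_ideal A"
  unfolding interior_ideal_def
proof (intro CollectI exI conjI allI impI)
  show "x0_decomp ((X0 :: 'd option cpoly) ^ k) (\<lambda>m. if m = k then 1 else 0)"
    by (rule x0_decomp_X0_power)
  show "(if 0 = k then 1 else 0) = 0"
    using assms(1) by simp
  have "1 \<in> inverse_system (gr_ideal (interior ((\<lambda>x. real k *\<^sub>R x) ` zonotope A) \<inter> lattice_pts))"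
    (is "_ \<in> inverse_system (gr_ideal ?X)")
    using assms(2,3) lookup_0_gr_ideal[of ?X] by (blast intro: one_in_inverse_system)
  then show "(if m = k then 1 else 0) \<in> inverse_system
      (gr_ideal (interior ((\<lambda>x. real m *\<^sub>R x) ` zonotope A) \<inter> lattice_pts))" for m
    by (simp add: zero_in_inverse_system)
qed

lemma matrix_vector_mult_in_lattice_pts:
  fixes A :: "real^'n::finite^'d::finite"
  assumes "\<forall>i j. A $ i $ j \<in> \<int>" and "\<forall>j. x $ j \<in> \<int>"
  shows "A *v x \<in> lattice_pts"
  using assms unfolding lattice_pts_def
  by (auto simp: matrix_vector_mult_def intro!: Ints_sum Ints_mult)

lemma image_box_subset_interior_dilated_zonotope:
  fixes A :: "real^'n::finite^'d::finite"
  assumes surj: "surj ((*v) A)" and "c > 0"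
  shows "(*v) A ` box 0 (\<chi> i. c) \<subseteq> interior ((\<lambda>x. c *\<^sub>R x) ` zonotope A)"
proof (rule interior_maximal)
  show "open ((*v) A ` box 0 (\<chi> i. c))"
    by (rule open_surjective_linear_image[OF open_box _ surj]) simp
  show "(*v) A ` box 0 (\<chi> i. c) \<subseteq> (\<lambda>x. c *\<^sub>R x) ` zonotope A"
  proof
    fix x assume "x \<in> (*v) A ` box 0 (\<chi> i. c)"
    then obtain t where x: "x = A *v t" and t: "\<forall>i. 0 < t $ i \<and> t $ i < c"
      by (auto simp: mem_box_cart)
    have "x = c *\<^sub>R (A *v ((1 / c) *\<^sub>R t))"
      using \<open>c > 0\<close> x by (simp add: matrix_vector_mult_scaleR)
    moreover have "A *v ((1 / c) *\<^sub>R t) \<in> zonotope A"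
      using \<open>c > 0\<close> t unfolding zonotope_def
      by (intro CollectI exI[of _ "(1 / c) *\<^sub>R t"]) (auto simp: less_imp_le field_simps)
    ultimately show "x \<in> (\<lambda>x. c *\<^sub>R x) ` zonotope A"
      by blast
  qed
qed

lemma kernel_vector_nonzero_at_non_coloop:
  fixes A :: "real^'n::finite^'d::finite"
  assumes "\<not> coloop A j"
  shows "\<exists>w. A *v w = 0 \<and> w $ j \<noteq> 0"
proof -
  let ?c = "\<lambda>k. column k A"
  obtain B where B: "col_basis A B" and "j \<notin> B"
    using assms coloop_def by blast
  then have inj: "inj_on ?c B" and indep: "independent (?c ` B)"
    unfolding col_basis_def col_indep_def by auto
  have "?c j \<in> span (?c ` B)"
  proof (rule ccontr)
    assume not_span: "?c j \<notin> span (?c ` B)"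
    then have "?c j \<notin> ?c ` B"
      by (metis span_base)
    then have "col_indep A (insert j B)"
      using inj indep not_span \<open>j \<notin> B\<close> by (simp add: col_indep_def independent_insert)
    moreover have "B \<subset> insert j B"
      using \<open>j \<notin> B\<close> by auto
    ultimately show False
      using B col_basis_def by blast
  qed
  then obtain u where "?c j = (\<Sum>v\<in>?c ` B. u v *\<^sub>R v)"
    using span_finite[of "?c ` B"] by auto
  then have u: "?c j = (\<Sum>k\<in>B. u (?c k) *\<^sub>R ?c k)"
    by (simp add: sum.reindex[OF inj])
  define w where "w = (\<chi> k. if k = j then -1 else if k \<in> B then u (?c k) else 0)"
  have "A *v w = (\<Sum>k\<in>UNIV. w $ k *\<^sub>R ?c k)"
    by (simp add: matrix_mult_sum scalar_mult_eq_scaleR)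
  also have "\<dots> = (\<Sum>k\<in>insert j B. w $ k *\<^sub>R ?c k)"
    by (rule sum.mono_neutral_right) (auto simp: w_def)
  also have "\<dots> = w $ j *\<^sub>R ?c j + (\<Sum>k\<in>B. w $ k *\<^sub>R ?c k)"
    using \<open>j \<notin> B\<close> by simp
  also have "(\<Sum>k\<in>B. w $ k *\<^sub>R ?c k) = (\<Sum>k\<in>B. u (?c k) *\<^sub>R ?c k)"
    using \<open>j \<notin> B\<close> by (intro sum.cong) (auto simp: w_def)
  also have "w $ j *\<^sub>R ?c j + (\<Sum>k\<in>B. u (?c k) *\<^sub>R ?c k) = 0"
    using u by (simp add: w_def)
  finally show ?thesis
    by (intro exI[of _ w]) (simp add: w_def)
qed

lemma kernel_vector_nowhere_zero_on:
  fixes A :: "real^'n::finite^'d::finite"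
  assumes "\<forall>j\<in>S. \<not> coloop A j"
  shows "\<exists>v. A *v v = 0 \<and> (\<forall>i\<in>S. v $ i \<noteq> 0)"
  using finite[of S] assms
proof (induction S rule: finite_induct)
  case empty
  show ?case by (intro exI[of _ 0]) simp
next
  case (insert k S)
  obtain v where v: "A *v v = 0" "\<forall>i\<in>S. v $ i \<noteq> 0"
    using insert.IH insert.prems by blast
  obtain w where w: "A *v w = 0" "w $ k \<noteq> 0"
    using kernel_vector_nonzero_at_non_coloop insert.prems by blast
  obtain c :: real where c: "c \<notin> range (\<lambda>i. - v $ i / w $ i)" "c \<noteq> 0"
    using ex_new_if_finite[OF infinite_UNIV_char_0, of "insert 0 (range (\<lambda>i. - v $ i / w $ i))"]
    by auto
  have "(v + c *\<^sub>R w) $ i \<noteq> 0" if "i \<in> insert k S" for i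
  proof (cases "w $ i = 0")
    case True
    then show ?thesis
      using that v(2) w(2) by auto
  next
    case False
    moreover have "c \<noteq> - v $ i / w $ i"
      using c(1) by blast
    ultimately show ?thesis
      by (auto simp: field_simps)
  qed
  moreover have "A *v (v + c *\<^sub>R w) = 0"
    by (simp add: matrix_vector_right_distrib matrix_vector_mult_scaleR v w)
  ultimately show ?case
    by blast
qed

lemma small_kernel_vector_nowhere_zero:
  fixes A :: "real^'n::finite^'d::finite"
  assumes "\<forall>j. \<not> coloop A j"
  shows "\<exists>w. A *v w = 0 \<and> (\<forall>i. w $ i \<noteq> 0 \<and> \<bar>w $ i\<bar> < 1)"
proof -
  obtain v where v: "A *v v = 0" "\<forall>i. v $ i \<noteq> 0"
    using kernel_vector_nowhere_zero_on[of UNIV A] assms by auto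
  have "\<bar>v $ i\<bar> / (1 + norm v) < 1" for i
    using component_le_norm_cart[of v i] by (simp add: add_pos_nonneg)
  then show ?thesis
    using v by (intro exI[of _ "(1 / (1 + norm v)) *\<^sub>R v"])
      (auto simp: matrix_vector_mult_scaleR add_pos_nonneg abs_mult)
qed

lemma lattice_point_in_interior_zonotope:
  fixes A :: "real^'n::finite^'d::finite"
  assumes "\<forall>i j. A $ i $ j \<in> \<int>" and "surj ((*v) A)" and "\<forall>j. \<not> coloop A j"
  obtains p where "p \<in> interior (zonotope A)" and "p \<in> lattice_pts"
proof -
  obtain w where w: "A *v w = 0" "\<forall>i. w $ i \<noteq> 0 \<and> \<bar>w $ i\<bar> < 1"
    using small_kernel_vector_nowhere_zero assms(3) by blast
  define e :: "real^'n" where "e = (\<chi> i. if w $ i < 0 then 1 else 0)"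
  have "0 < (e + w) $ i \<and> (e + w) $ i < 1" for i
    using w(2)[rule_format, of i] by (auto simp: e_def abs_less_iff)
  then have "e + w \<in> box 0 (\<chi> i. 1)"
    by (simp add: mem_box_cart)
  then have "A *v (e + w) \<in> interior ((\<lambda>x. 1 *\<^sub>R x) ` zonotope A)"
    using image_box_subset_interior_dilated_zonotope[OF assms(2), of 1] by auto
  moreover have "A *v (e + w) = A *v e"
    by (simp add: matrix_vector_right_distrib w(1))
  moreover have "A *v e \<in> lattice_pts"
    using assms(1) by (intro matrix_vector_mult_in_lattice_pts) (auto simp: e_def)
  ultimately show ?thesis
    using that by simp
qed

lemma matrix_vector_mult_ones_in_interior_double_zonotope:
  fixes A :: "real^'n::finite^'d::finite"
  assumes "surj ((*v) A)"
  shows "A *v (\<chi> i. 1) \<in> interior ((\<lambda>x. 2 *\<^sub>R x) ` zonotope A)"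
proof -
  have "(\<chi> i. (1::real)) \<in> box 0 (\<chi> i. 2)"
    by (simp add: mem_box_cart)
  then show ?thesis
    using image_box_subset_interior_dilated_zonotope[OF assms, of 2] by auto
qed

theorem lemma6p3:
  fixes A :: "real^'n::finite^'d::finite"
  assumes "unimodular_matrix A"
  shows "((\<forall>j. \<not> coloop A j) \<longrightarrow> (X0 :: 'd option cpoly) \<in> interior_ideal A)
         \<and> (X0 :: 'd option cpoly) ^ 2 \<in> interior_ideal A"
proof (intro conjI impI)
  have integral: "\<forall>i j. A $ i $ j \<in> \<int>" and surj: "surj ((*v) A)"
    using assms full_rank_surjective unfolding unimodular_matrix_def by auto
  show "(X0 :: 'd option cpoly) \<in> interior_ideal A" if no_coloops: "\<forall>j. \<not> coloop A j"
  proof -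
    obtain p where "p \<in> interior (zonotope A)" "p \<in> lattice_pts"
      using lattice_point_in_interior_zonotope[OF integral surj no_coloops] .
    then show ?thesis
      using X0_power_in_interior_ideal[of 1 p A] by simp
  qed
  have "A *v (\<chi> i. 1) \<in> lattice_pts"
    using integral by (intro matrix_vector_mult_in_lattice_pts) auto
  then show "(X0 :: 'd option cpoly) ^ 2 \<in> interior_ideal A"
    using X0_power_in_interior_ideal[of 2 "A *v (\<chi> i. 1)" A]
      matrix_vector_mult_ones_in_interior_double_zonotope[OF surj] by simp
qed

end
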